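(* Let $A,B:\mathbb{N}\to\mathbb{R}$ be functions with $\sum_{m\mid n} A(m) = B(n)$ for all $n\in\mathbb{N}$, and let $r,s$ be reals with $s\le\min\{0,r\}$. Then for every $n\in\mathbb{N}$: (i) $\sum_{m\mid n} \frac{m^s}{\varphi(m)^r} A(m) = \sum_{k\mid n} g^{r,s}_{k,n/k} B(k)$. (ii) If $\alpha,\beta:\mathbb{N}\to\mathbb{R}_{>0}$ satisfy $\beta(N)=\sum_{m\mid N}\alpha(m)$ for all $N\in\mathbb{N}$, and $B(k)\ge\beta(k)$ for all positive divisors $k$ of $n$, then $\sum_{m\mid n} \frac{m^s}{\varphi(m)^r}A(m) \ge \sum_{m\mid n}\frac{m^s}{\varphi(m)^r}\alpha(m)$, with equality if and only if $B(k)=\beta(k)$ for every positive divisor $k$ of $n$ such that $g^{r,s}_{k,n/k}\ne 0$.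
   Context: $\mu$ is the Möbius function, $\varphi$ is Euler's totient function, and for positive integers $m,j$, $g^{r,s}_{m,j} := \sum_{i\mid j} \frac{\mu(i)\,(mi)^s}{\varphi(mi)^r}$. $\mathbb{N}=\{1,2,3,\dots\}$. *)

theory Defs
  imports "HOL-Number_Theory.Number_Theory" "HOL-Computational_Algebra.Squarefree"
begin

definition moebius_mu :: "nat \<Rightarrow> real" where
  "moebius_mu n = (if n = 0 then 0 else if squarefree n then (-1) ^ card (prime_factors n) else 0)"

definition g_fun :: "real \<Rightarrow> real \<Rightarrow> nat \<Rightarrow> nat \<Rightarrow> real" where
  "g_fun r s m j = (\<Sum>i | i dvd j. moebius_mu i * real (m * i) powr s / real (totient (m * i)) powr r)"

end

theory Submission
  imports Defs
begin

(* Moebius inversion writes A as the Dirichlet convolution of mu and B; substituting it and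
   regrouping the double divisor sum by the divisor k of n turns the weighted sum of A into
   the sum of g_{k,n/k} B(k), and likewise for alpha and beta.  Part (ii) then only needs
   g_{k,j} >= 0: for a prime p not dividing j one has
   g_{k,p^a j} = (1 - p^s / t^r) g_{k,j} with t = p if p divides k and t = p - 1 otherwise,
   and s <= min 0 r makes the factor non-negative.  The difference of the two sides of (ii) is
   then a sum of the non-negative terms g_{k,n/k} (B(k) - beta(k)). *)

lemma moebius_mu_Suc_0 [simp]: "moebius_mu (Suc 0) = 1"
  by (simp add: moebius_mu_def)

lemma moebius_mu_prime_mult_dvd:
  assumes "prime p" "p dvd i"
  shows "moebius_mu (p * i) = 0"
proof -
  have "p ^ 2 dvd p * i" using assms by (auto simp: power2_eq_square)
  then have "\<not> squarefree (p * i)" using assms by (meson not_prime_unit not_squarefreeI)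
  then show ?thesis by (simp add: moebius_mu_def)
qed

lemma moebius_mu_prime_mult:
  assumes "prime p" "\<not> p dvd i" "i > 0"
  shows "moebius_mu (p * i) = - moebius_mu i"
proof -
  have "coprime p i" using assms by (simp add: prime_imp_coprime)
  then have "squarefree (p * i) \<longleftrightarrow> squarefree i"
    using assms squarefree_mult_coprime squarefree_multD squarefree_prime by blast
  moreover have "prime_factors (p * i) = insert p (prime_factors i)"
    using assms prime_factors_product[of p i] by (auto simp: prime_prime_factors)
  moreover have "p \<notin> prime_factors i" using assms by auto
  ultimately show ?thesis using assms by (simp add: moebius_mu_def)
qed

lemma dvd_prime_power_mult_iff_dvd:
  assumes "prime (p::nat)" "\<not> p dvd j"
  shows "i dvd p ^ a * j \<and> \<not> p dvd i \<longleftrightarrow> i dvd j"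
proof
  assume i: "i dvd p ^ a * j \<and> \<not> p dvd i"
  then have "coprime p i" using assms by (simp add: prime_imp_coprime)
  then have "coprime i (p ^ a)" by (simp add: coprime_commute)
  then show "i dvd j" using i by (simp add: coprime_dvd_mult_right_iff)
qed (use assms dvd_trans in auto)

lemma prime_power_coprime_induct [consumes 1, case_names one prime_power_mult]:
  fixes n :: nat
  assumes "n > 0" and "P 1"
    and step: "\<And>p a j. prime p \<Longrightarrow> a > 0 \<Longrightarrow> j > 0 \<Longrightarrow> \<not> p dvd j \<Longrightarrow> P j \<Longrightarrow> P (p ^ a * j)"
  shows "P n"
  using assms(1)
proof (induction n rule: less_induct)
  case (less n)
  show ?case
  proof (cases "n = 1")
    case True
    then show ?thesis using \<open>P 1\<close> by simp
  next
    case False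
    then obtain p where p: "prime p" "p dvd n" using prime_factor_nat by blast
    define a where "a = multiplicity p n"
    obtain j where j: "n = p ^ a * j" "\<not> p dvd j"
      using multiplicity_decompose'[of n p] less.prems p(1) unfolding a_def
      by (metis not_prime_unit not_gr0)
    have "a > 0" using p less.prems by (simp add: prime_multiplicity_gt_zero_iff a_def)
    have "j > 0" using j less.prems by (cases j) auto
    have "p ^ a > 1" using \<open>a > 0\<close> prime_gt_1_nat[OF p(1)] by (metis one_less_power)
    then have "j < n" using j(1) \<open>j > 0\<close> by simp
    then show ?thesis using step[OF p(1) \<open>a > 0\<close> \<open>j > 0\<close> j(2)] less.IH \<open>j > 0\<close> j(1) by simp
  qed
qed

(* Of the divisors of p ^ a * j only the squarefree ones, i and p * i with i dvd j, contribute. *)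
lemma sum_dvd_moebius_prime_power_mult:
  fixes F :: "nat \<Rightarrow> real"
  assumes p: "prime p" and j: "\<not> p dvd j" "j > 0" and a: "a > 0"
  shows "(\<Sum>i | i dvd p ^ a * j. moebius_mu i * F i)
       = (\<Sum>i | i dvd j. moebius_mu i * (F i - F (p * i)))"
proof -
  define D where "D = (\<lambda>n::nat. {i. i dvd n})"
  define m where "m = p ^ (a - 1) * j"
  have n: "p ^ a * j = p * m" using a by (cases a) (auto simp: m_def)
  have fin: "finite (D n)" if "n > 0" for n using that by (simp add: D_def)
  have m0: "m > 0" using p j by (simp add: m_def prime_gt_0_nat)
  have coprime_part: "D (p * m) - {i. p dvd i} = D j"
    unfolding n[symmetric] using dvd_prime_power_mult_iff_dvd[OF p j(1)] by (auto simp: D_def)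
  have sum_split: "(\<Sum>i\<in>D (p * m). moebius_mu i * F i)
      = (\<Sum>i\<in>D j. moebius_mu i * F i) + (\<Sum>i\<in>D (p * m) \<inter> {i. p dvd i}. moebius_mu i * F i)"
    using sum.Int_Diff[OF fin, of "p * m" _ "{i. p dvd i}"] m0 p coprime_part
    by (simp add: prime_gt_0_nat add.commute)
  have "D (p * m) \<inter> {i. p dvd i} = (*) p ` D m"
    using p by (auto simp: D_def prime_gt_0_nat elim!: dvdE)
  then have "(\<Sum>i\<in>D (p * m) \<inter> {i. p dvd i}. moebius_mu i * F i)
      = (\<Sum>i\<in>D m. moebius_mu (p * i) * F (p * i))"
    using p by (simp add: sum.reindex inj_on_def prime_gt_0_nat)
  also have "\<dots> = (\<Sum>i\<in>D m - {i. p dvd i}. moebius_mu (p * i) * F (p * i))"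
    using moebius_mu_prime_mult_dvd[OF p] fin[OF m0] by (intro sum.mono_neutral_right) auto
  also have "\<dots> = (\<Sum>i\<in>D j. - moebius_mu i * F (p * i))"
  proof -
    have "D m - {i. p dvd i} = D j"
      using dvd_prime_power_mult_iff_dvd[OF p j(1)] by (auto simp: D_def m_def)
    moreover have "i > 0" "\<not> p dvd i" if "i \<in> D j" for i
      using that j dvd_trans by (auto simp: D_def intro: dvd_pos_nat)
    ultimately show ?thesis using moebius_mu_prime_mult[OF p] by (intro sum.cong) auto
  qed
  finally show ?thesis
    using sum_split unfolding n
    by (simp add: D_def right_diff_distrib sum_subtractf sum_negf)
qed

lemma sum_moebius_dvd: "n > 0 \<Longrightarrow> (\<Sum>i | i dvd n. moebius_mu i) = (if n = 1 then 1 else 0)"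
proof (induction n rule: prime_power_coprime_induct)
  case one
  then show ?case by simp
next
  case (prime_power_mult p a j)
  then have "p ^ a * j \<noteq> 1" using not_prime_1 by (auto simp: power_eq_1_iff)
  then show ?case
    using sum_dvd_moebius_prime_power_mult[OF prime_power_mult(1,4,3,2), of "\<lambda>_. 1"] by simp
qed

lemma sum_moebius_dvd_div:
  assumes "n > 0"
  shows "(\<Sum>t | t dvd n. moebius_mu (n div t)) = (if n = 1 then 1 else 0)"
proof -
  have "(\<Sum>t | t dvd n. moebius_mu (n div t)) = (\<Sum>t | t dvd n. moebius_mu t)"
    using assms by (intro sum.reindex_bij_witness[of _ "(div) n" "(div) n"]) (auto elim: dvdE)
  then show ?thesis using sum_moebius_dvd[OF assms] by simp
qed

lemma sum_dvd_dvd_div_regroup: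
  fixes H :: "nat \<Rightarrow> nat \<Rightarrow> 'a :: comm_monoid_add"
  assumes n: "n > 0"
  shows "(\<Sum>k | k dvd n. \<Sum>i | i dvd n div k. H k i) = (\<Sum>m | m dvd n. \<Sum>k | k dvd m. H k (m div k))"
proof -
  have fin: "finite {d. d dvd n}" using n by simp
  have inner: "(\<Sum>i | i dvd n div k. H k i) = (\<Sum>m\<in>{m \<in> {d. d dvd n}. k dvd m}. H k (m div k))"
    if "k dvd n" for k
    using that n
    by (intro sum.reindex_bij_witness[of _ "\<lambda>m. m div k" "\<lambda>i. k * i"])
       (auto elim!: dvdE simp: mult.assoc)
  have "(\<Sum>k | k dvd n. \<Sum>i | i dvd n div k. H k i)
      = (\<Sum>k | k dvd n. \<Sum>m\<in>{m \<in> {d. d dvd n}. k dvd m}. H k (m div k))"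
    by (intro sum.cong refl inner) simp
  also have "\<dots> = (\<Sum>m | m dvd n. \<Sum>k\<in>{k \<in> {d. d dvd n}. k dvd m}. H k (m div k))"
    by (rule sum.swap_restrict[OF fin fin])
  also have "\<dots> = (\<Sum>m | m dvd n. \<Sum>k | k dvd m. H k (m div k))"
    by (intro sum.cong refl arg_cong[where f = "\<lambda>A. sum _ A"]) (auto intro: dvd_trans)
  finally show ?thesis .
qed

lemma moebius_inversion:
  fixes A B :: "nat \<Rightarrow> real"
  assumes AB: "\<And>n. n > 0 \<Longrightarrow> (\<Sum>d | d dvd n. A d) = B n" and m: "m > 0"
  shows "A m = (\<Sum>k | k dvd m. moebius_mu (m div k) * B k)"
proof -
  have "(\<Sum>k | k dvd m. moebius_mu (m div k) * B k)
      = (\<Sum>k | k dvd m. \<Sum>d | d dvd k. moebius_mu (m div (d * (k div d))) * A d)"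
    using m by (intro sum.cong refl) (auto simp: AB[symmetric] sum_distrib_left intro: dvd_pos_nat)
  also have "\<dots> = (\<Sum>d | d dvd m. \<Sum>t | t dvd m div d. moebius_mu (m div (d * t)) * A d)"
    by (rule sum_dvd_dvd_div_regroup[OF m, symmetric])
  also have "\<dots> = (\<Sum>d | d dvd m. if d = m then A d else 0)"
  proof (rule sum.cong[OF refl])
    fix d assume "d \<in> {d. d dvd m}"
    then have "m div d > 0" "m div d = 1 \<longleftrightarrow> d = m" using m by (auto elim!: dvdE)
    then show "(\<Sum>t | t dvd m div d. moebius_mu (m div (d * t)) * A d) = (if d = m then A d else 0)"
      by (simp add: div_mult2_eq sum_distrib_right[symmetric] sum_moebius_dvd_div)
  qed
  also have "\<dots> = A m" using m by simp
  finally show ?thesis ..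
qed

lemma sum_dvd_weighted_moebius_inversion:
  fixes A B w :: "nat \<Rightarrow> real"
  assumes AB: "\<And>n. n > 0 \<Longrightarrow> (\<Sum>d | d dvd n. A d) = B n" and n: "n > 0"
  shows "(\<Sum>m | m dvd n. w m * A m)
       = (\<Sum>k | k dvd n. (\<Sum>i | i dvd n div k. moebius_mu i * w (k * i)) * B k)"
proof -
  have "(\<Sum>k | k dvd n. (\<Sum>i | i dvd n div k. moebius_mu i * w (k * i)) * B k)
      = (\<Sum>k | k dvd n. \<Sum>i | i dvd n div k. moebius_mu i * w (k * i) * B k)"
    by (simp add: sum_distrib_right)
  also have "\<dots> = (\<Sum>m | m dvd n. \<Sum>k | k dvd m. moebius_mu (m div k) * w (k * (m div k)) * B k)"
    by (rule sum_dvd_dvd_div_regroup[OF n])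
  also have "\<dots> = (\<Sum>m | m dvd n. w m * (\<Sum>k | k dvd m. moebius_mu (m div k) * B k))"
    by (intro sum.cong refl) (auto simp: sum_distrib_left mult_ac)
  also have "\<dots> = (\<Sum>m | m dvd n. w m * A m)"
    using n by (intro sum.cong refl) (auto simp: moebius_inversion[OF AB] intro: dvd_pos_nat)
  finally show ?thesis ..
qed

lemma totient_prime_mult:
  assumes "prime p"
  shows "totient (p * n) = (if p dvd n then p else p - 1) * totient n"
proof (cases "p dvd n")
  case True
  then have "gcd p n = p" by (simp add: gcd_nat.absorb1)
  moreover have "p - 1 > 0" using prime_gt_1_nat[OF assms] by simp
  ultimately show ?thesis
    using True totient_mult[of p n] totient_prime[OF assms] by simp
next
  case False
  then have "coprime p n" using assms by (simp add: prime_imp_coprime)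
  then show ?thesis using False totient_mult_coprime totient_prime[OF assms] by simp
qed

lemma powr_le_powr_of_le_min:
  fixes x t r s :: real
  assumes "1 \<le> t" "t \<le> x" "s \<le> min 0 r"
  shows "x powr s \<le> t powr r"
proof (cases "r \<ge> 0")
  case True
  have "x powr s \<le> x powr 0" using assms by (intro powr_mono) auto
  also have "\<dots> = t powr 0" using assms by simp
  also have "\<dots> \<le> t powr r" using True assms by (intro powr_mono) auto
  finally show ?thesis .
next
  case False
  have "x powr s \<le> x powr r" using assms by (intro powr_mono) auto
  also have "\<dots> \<le> t powr r" using False assms by (intro powr_mono2') auto
  finally show ?thesis .
qed

lemma g_fun_eq_sum:
  "g_fun r s k j = (\<Sum>i | i dvd j. moebius_mu i * (real (k * i) powr s / real (totient (k * i)) powr r))"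
  unfolding g_fun_def times_divide_eq_right ..

lemma g_fun_prime_power_mult:
  assumes p: "prime p" and j: "\<not> p dvd j" "j > 0" and a: "a > 0"
  shows "g_fun r s k (p ^ a * j)
       = (1 - real p powr s / real (if p dvd k then p else p - 1) powr r) * g_fun r s k j"
proof -
  define w where "w m = real m powr s / real (totient m) powr r" for m
  define c where "c = real p powr s / real (if p dvd k then p else p - 1) powr r"
  have ratio: "w (k * (p * i)) = c * w (k * i)" if "i dvd j" for i
  proof -
    have "\<not> p dvd i" using that j dvd_trans by blast
    then have "totient (p * (k * i)) = (if p dvd k then p else p - 1) * totient (k * i)"
      using p by (simp add: totient_prime_mult prime_dvd_mult_iff)
    then show ?thesis
      by (simp add: w_def c_def powr_mult mult.left_commute[of k p])
  qed
  have "(\<Sum>i | i dvd j. moebius_mu i * (w (k * i) - w (k * (p * i))))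
      = (\<Sum>i | i dvd j. (1 - c) * (moebius_mu i * w (k * i)))"
    using ratio by (intro sum.cong) (auto simp: algebra_simps)
  then show ?thesis
    unfolding g_fun_eq_sum w_def[symmetric] sum_dvd_moebius_prime_power_mult[OF p j a] c_def[symmetric]
    by (simp add: sum_distrib_left)
qed

lemma g_fun_nonneg:
  assumes "s \<le> min 0 r" "j > 0"
  shows "g_fun r s k j \<ge> 0"
  using assms(2)
proof (induction j rule: prime_power_coprime_induct)
  case one
  then show ?case by (simp add: g_fun_eq_sum)
next
  case (prime_power_mult p a j)
  define t where "t = real (if p dvd k then p else p - 1)"
  have "real p powr s \<le> t powr r"
    unfolding t_def using prime_ge_2_nat[OF prime_power_mult(1)] assms(1)
    by (intro powr_le_powr_of_le_min) auto
  moreover have "t powr r > 0"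
    unfolding t_def using prime_ge_2_nat[OF prime_power_mult(1)] by simp
  ultimately have "1 - real p powr s / t powr r \<ge> 0"
    by (simp add: divide_le_eq_1)
  moreover have "g_fun r s k (p ^ a * j) = (1 - real p powr s / t powr r) * g_fun r s k j"
    unfolding t_def using prime_power_mult by (intro g_fun_prime_power_mult) auto
  ultimately show ?case
    using prime_power_mult.IH by simp
qed

lemma sum_mult_mono_nonneg_weights:
  fixes c f g :: "'a \<Rightarrow> real"
  assumes "finite S" and "\<And>k. k \<in> S \<Longrightarrow> c k \<ge> 0" and "\<And>k. k \<in> S \<Longrightarrow> g k \<le> f k"
  shows "(\<Sum>k\<in>S. c k * g k) \<le> (\<Sum>k\<in>S. c k * f k)"
    and "(\<Sum>k\<in>S. c k * f k) = (\<Sum>k\<in>S. c k * g k) \<longleftrightarrow> (\<forall>k\<in>S. c k \<noteq> 0 \<longrightarrow> f k = g k)"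
proof -
  have diff: "(\<Sum>k\<in>S. c k * f k) - (\<Sum>k\<in>S. c k * g k) = (\<Sum>k\<in>S. c k * (f k - g k))"
    by (simp add: sum_subtractf right_diff_distrib)
  have nonneg: "c k * (f k - g k) \<ge> 0" if "k \<in> S" for k
    using assms(2,3)[OF that] by simp
  then have "(\<Sum>k\<in>S. c k * (f k - g k)) \<ge> 0"
    by (rule sum_nonneg)
  then show "(\<Sum>k\<in>S. c k * g k) \<le> (\<Sum>k\<in>S. c k * f k)"
    using diff by linarith
  have "(\<Sum>k\<in>S. c k * f k) = (\<Sum>k\<in>S. c k * g k) \<longleftrightarrow> (\<Sum>k\<in>S. c k * (f k - g k)) = 0"
    using diff by linarith
  also have "\<dots> \<longleftrightarrow> (\<forall>k\<in>S. c k * (f k - g k) = 0)"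
    using assms(1) nonneg by (rule sum_nonneg_eq_0_iff)
  also have "\<dots> \<longleftrightarrow> (\<forall>k\<in>S. c k \<noteq> 0 \<longrightarrow> f k = g k)"
    by auto
  finally show "(\<Sum>k\<in>S. c k * f k) = (\<Sum>k\<in>S. c k * g k) \<longleftrightarrow> (\<forall>k\<in>S. c k \<noteq> 0 \<longrightarrow> f k = g k)" .
qed

theorem lemma2p2:
  fixes A B :: "nat \<Rightarrow> real" and r s :: real
  assumes hAB: "\<And>n. n > 0 \<Longrightarrow> (\<Sum>m | m dvd n. A m) = B n"
    and hs: "s \<le> min 0 r"
  shows "\<forall>n>0.
    (\<Sum>m | m dvd n. real m powr s / real (totient m) powr r * A m)
       = (\<Sum>k | k dvd n. g_fun r s k (n div k) * B k)
    \<and> (\<forall>\<alpha> \<beta> :: nat \<Rightarrow> real.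
         (\<forall>N>0. \<alpha> N > 0 \<and> \<beta> N > 0) \<longrightarrow>
         (\<forall>N>0. \<beta> N = (\<Sum>m | m dvd N. \<alpha> m)) \<longrightarrow>
         (\<forall>k. k dvd n \<longrightarrow> B k \<ge> \<beta> k) \<longrightarrow>
         ((\<Sum>m | m dvd n. real m powr s / real (totient m) powr r * A m)
            \<ge> (\<Sum>m | m dvd n. real m powr s / real (totient m) powr r * \<alpha> m)
          \<and> ((\<Sum>m | m dvd n. real m powr s / real (totient m) powr r * A m)
               = (\<Sum>m | m dvd n. real m powr s / real (totient m) powr r * \<alpha> m)
             \<longleftrightarrow> (\<forall>k. k dvd n \<and> g_fun r s k (n div k) \<noteq> 0 \<longrightarrow> B k = \<beta> k))))"
proof (intro allI impI conjI)
  fix n :: nat assume n: "n > 0"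
  have transform: "(\<Sum>m | m dvd n. real m powr s / real (totient m) powr r * X m)
      = (\<Sum>k | k dvd n. g_fun r s k (n div k) * Y k)"
    if "\<And>N. N > 0 \<Longrightarrow> (\<Sum>m | m dvd N. X m) = Y N" for X Y
    unfolding g_fun_eq_sum by (rule sum_dvd_weighted_moebius_inversion[OF that n])
  show transform_A: "(\<Sum>m | m dvd n. real m powr s / real (totient m) powr r * A m)
      = (\<Sum>k | k dvd n. g_fun r s k (n div k) * B k)"
    by (rule transform[OF hAB])
  fix \<alpha> \<beta> :: "nat \<Rightarrow> real"
  assume \<alpha>\<beta>: "\<forall>N>0. \<beta> N = (\<Sum>m | m dvd N. \<alpha> m)" and B_ge: "\<forall>k. k dvd n \<longrightarrow> B k \<ge> \<beta> k"
  have transform_\<alpha>: "(\<Sum>m | m dvd n. real m powr s / real (totient m) powr r * \<alpha> m)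
      = (\<Sum>k | k dvd n. g_fun r s k (n div k) * \<beta> k)"
    by (rule transform) (use \<alpha>\<beta> in auto)
  have "finite {k. k dvd n}" "\<And>k. k \<in> {k. k dvd n} \<Longrightarrow> g_fun r s k (n div k) \<ge> 0"
    "\<And>k. k \<in> {k. k dvd n} \<Longrightarrow> \<beta> k \<le> B k"
    using n hs B_ge by (auto intro!: g_fun_nonneg elim: dvdE)
  note mono = sum_mult_mono_nonneg_weights[OF this]
  show "(\<Sum>m | m dvd n. real m powr s / real (totient m) powr r * A m)
      \<ge> (\<Sum>m | m dvd n. real m powr s / real (totient m) powr r * \<alpha> m)"
    unfolding transform_A transform_\<alpha> by (rule mono(1))
  show "(\<Sum>m | m dvd n. real m powr s / real (totient m) powr r * A m)
      = (\<Sum>m | m dvd n. real m powr s / real (totient m) powr r * \<alpha> m)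
    \<longleftrightarrow> (\<forall>k. k dvd n \<and> g_fun r s k (n div k) \<noteq> 0 \<longrightarrow> B k = \<beta> k)"
    unfolding transform_A transform_\<alpha> using mono(2) by auto
qed

end
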